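(* For every integer $k\ge1$, let $W_k(x)=\sum_{n\ge1}w_{n,k}x^n$, where $w_{n,k}$ is the number of un-ordered rooted binary trees $t$ with $n$ leaves and $\gamma(t)\le k$. Then $$W_k(x)=x+\frac12W_k(x)^2+\frac12W_k(x^2)-x^{k+1},$$ and hence $$W_k(x)=1-\sqrt{1-2\varphi_k(x)},\qquad \varphi_k(x)=x+\frac{W_k(x^2)}{2}-x^{k+1}.$$
   Context: An un-ordered rooted binary tree is a rooted tree in which every internal node has exactly two children, with no order on the children (trees are considered up to isomorphism); its size is its number of leaves. A tree is a caterpillar if every node is either a leaf or has at least one leaf among its direct children. The subtree of $t$ at a node $v$ consists of $v$ and all its descendants, and $\gamma(t)$ is the largest number of leaves of a caterpillar occurring as the subtree of $t$ at some node. *)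

theory Defs
  imports Complex_Main "HOL-Computational_Algebra.Formal_Power_Series"
begin

text \<open>Rooted binary trees with ordered children; un-ordered trees are the
  classes modulo the isomorphism relation \<open>btree_iso\<close> (swapping children).\<close>
datatype btree = Leaf | Node btree btree

fun leaves :: "btree \<Rightarrow> nat" where
  "leaves Leaf = 1"
| "leaves (Node a b) = leaves a + leaves b"

fun btree_iso :: "btree \<Rightarrow> btree \<Rightarrow> bool" where
  "btree_iso Leaf Leaf = True"
| "btree_iso (Node a b) (Node c d) =
     ((btree_iso a c \<and> btree_iso b d) \<or> (btree_iso a d \<and> btree_iso b c))"
| "btree_iso _ _ = False"

definition iso_rel :: "(btree \<times> btree) set" where
  "iso_rel = {(s, t). btree_iso s t}"

fun caterpillar :: "btree \<Rightarrow> bool" where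
  "caterpillar Leaf = True"
| "caterpillar (Node a b) = ((a = Leaf \<or> b = Leaf) \<and> caterpillar a \<and> caterpillar b)"

fun subtrees :: "btree \<Rightarrow> btree set" where
  "subtrees Leaf = {Leaf}"
| "subtrees (Node a b) = insert (Node a b) (subtrees a \<union> subtrees b)"

definition gamma :: "btree \<Rightarrow> nat" where
  "gamma t = Max (leaves ` {s \<in> subtrees t. caterpillar s})"

definition w :: "nat \<Rightarrow> nat \<Rightarrow> nat" where
  "w n k = card ({t. leaves t = n \<and> gamma t \<le> k} // iso_rel)"

definition W :: "nat \<Rightarrow> real fps" where
  "W k = Abs_fps (\<lambda>n. real (w n k))"

definition phi :: "nat \<Rightarrow> real fps" where
  "phi k = fps_X + fps_compose (W k) (fps_X ^ 2) / 2 - fps_X ^ (k + 1)"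

end

theory Submission
  imports Defs "HOL-Library.Countable"
begin

(* Un-ordered trees are represented by canonical ordered trees: at every node the
   child with the smaller countable code comes first, and two trees are isomorphic
   iff they have the same canonical form.  Hence w n k counts canonical trees with
   n leaves and gamma <= k.  The statistic gamma satisfies a simple recursion, from
   which a canonical tree with n >= 2 leaves and gamma <= k is a node over an
   un-ordered pair {a, b} of such trees, except for the single caterpillar with
   n = k + 1 leaves (all caterpillars of a given size are isomorphic).  Counting
   un-ordered pairs via ordered pairs and the diagonal gives
     2 w(n) = sum_i w(i) w(n-i) + [n even] w(n/2) + 2 [n = 1] - 2 [n = k + 1],
   which is the coefficientwise form of the functional equation for W k.  Finally,
   W = phi + W^2/2 means (1 - W)^2 = 1 - 2 phi, and since both sides have constant
   term 1, 1 - W is the principal square root of 1 - 2 phi. *)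

section \<open>Canonical representatives of un-ordered trees\<close>

instance btree :: countable by countable_datatype

fun canon :: "btree \<Rightarrow> btree" where
  "canon Leaf = Leaf"
| "canon (Node a b) = (let a' = canon a; b' = canon b in
     if to_nat a' \<le> to_nat b' then Node a' b' else Node b' a')"

fun canonical :: "btree \<Rightarrow> bool" where
  "canonical Leaf = True"
| "canonical (Node a b) = (canonical a \<and> canonical b \<and> to_nat a \<le> to_nat b)"

lemma canonical_canon: "canonical (canon t)"
  by (induction t) (auto simp: Let_def)

lemma canon_canonical: "canonical t \<Longrightarrow> canon t = t"
  by (induction t) (auto simp: Let_def)

lemma leaves_pos: "leaves t \<ge> 1"
  by (induction t) auto

lemma leaves_neq_0: "leaves t \<noteq> 0"
  using leaves_pos[of t] by simp

lemma leaves_canon: "leaves (canon t) = leaves t"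
  by (induction t) (auto simp: Let_def)

lemma canon_eq_Leaf_iff: "canon t = Leaf \<longleftrightarrow> t = Leaf"
  by (cases t) (auto simp: Let_def)

lemma caterpillar_canon: "caterpillar (canon t) = caterpillar t"
  by (induction t) (auto simp: Let_def canon_eq_Leaf_iff)

lemma canon_Node_eq_iff:
  "canon (Node a b) = canon (Node c d) \<longleftrightarrow>
   (canon a = canon c \<and> canon b = canon d) \<or> (canon a = canon d \<and> canon b = canon c)"
  by (auto simp: Let_def split: if_splits)

lemma btree_iso_iff_canon: "btree_iso s t \<longleftrightarrow> canon s = canon t"
proof (induction s t rule: btree_iso.induct)
  case (2 a b c d)
  then show ?case by (simp only: btree_iso.simps canon_Node_eq_iff)
qed (auto simp: Let_def)

section \<open>A recursion for gamma\<close>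

text \<open>The largest caterpillar subtree of a node is either one in a child or the
  node itself.\<close>
fun gamma_rec :: "btree \<Rightarrow> nat" where
  "gamma_rec Leaf = 1"
| "gamma_rec (Node a b) = max (max (gamma_rec a) (gamma_rec b))
     (if caterpillar (Node a b) then leaves a + leaves b else 0)"

lemma finite_subtrees: "finite (subtrees t)"
  by (induction t) auto

lemma Leaf_in_subtrees: "Leaf \<in> subtrees t"
  by (induction t) auto

lemma gamma_eq_gamma_rec: "gamma t = gamma_rec t"
proof (induction t)
  case Leaf
  then show ?case by (simp add: gamma_def)
next
  case (Node a b)
  let ?S = "\<lambda>t. leaves ` {s \<in> subtrees t. caterpillar s}"
  let ?top = "if caterpillar (Node a b) then {leaves a + leaves b} else {}"
  have fin: "finite (?S t)" and ne: "?S t \<noteq> {}" for t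
    using finite_subtrees[of t] Leaf_in_subtrees[of t] by force+
  have "{s \<in> subtrees (Node a b). caterpillar s} =
      (if caterpillar (Node a b) then {Node a b} else {}) \<union>
      ({s \<in> subtrees a. caterpillar s} \<union> {s \<in> subtrees b. caterpillar s})"
    by (auto simp del: caterpillar.simps)
  then have "?S (Node a b) = ?top \<union> (?S a \<union> ?S b)"
    by (simp add: image_Un del: caterpillar.simps)
  then have "gamma (Node a b) =
      max (if caterpillar (Node a b) then leaves a + leaves b else 0) (max (Max (?S a)) (Max (?S b)))"
    using fin ne by (simp add: gamma_def Max_Un del: caterpillar.simps)
  then show ?case
    using Node by (simp add: gamma_def max.commute max.left_commute del: caterpillar.simps)
qed

lemma gamma_rec_canon: "gamma_rec (canon t) = gamma_rec t"
  by (induction t) (auto simp: Let_def caterpillar_canon canon_eq_Leaf_iff leaves_canon)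

lemma gamma_rec_le_leaves: "gamma_rec t \<le> leaves t"
  by (induction t) auto

lemma gamma_rec_caterpillar: "caterpillar t \<Longrightarrow> gamma_rec t = leaves t"
  by (induction t) auto

lemma gamma_rec_Node_le_iff:
  "gamma_rec (Node a b) \<le> k \<longleftrightarrow>
   gamma_rec a \<le> k \<and> gamma_rec b \<le> k \<and> \<not> (caterpillar (Node a b) \<and> k < leaves (Node a b))"
  by (auto simp del: caterpillar.simps)

section \<open>Caterpillars are unique up to isomorphism\<close>

fun comb :: "nat \<Rightarrow> btree" where
  "comb 0 = Leaf"
| "comb (Suc m) = Node Leaf (comb m)"

lemma caterpillar_comb: "caterpillar (comb m)" and leaves_comb: "leaves (comb m) = Suc m"
  by (induction m) auto

lemma caterpillar_canon_eq_comb: "caterpillar t \<Longrightarrow> canon t = canon (comb (leaves t - 1))"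
proof (induction t)
  case (Node a b)
  have swap: "canon (Node a b) = canon (Node b a)"
    unfolding canon_Node_eq_iff by blast
  have "canon (Node Leaf c) = canon (comb (leaves (Node Leaf c) - 1))"
    if "c \<in> {a, b}" "caterpillar c" for c
  proof -
    obtain m where "leaves c = Suc m"
      using leaves_pos[of c] by (cases "leaves c") auto
    then have "comb (leaves (Node Leaf c) - 1) = Node Leaf (comb (leaves c - 1))" by simp
    then show ?thesis
      unfolding canon_Node_eq_iff using Node.IH that by auto
  qed
  then show ?case using Node.prems swap by (auto simp: add.commute)
qed simp

lemma canonical_caterpillar_unique:
  assumes "canonical t" "caterpillar t"
  shows "t = canon (comb (leaves t - 1))"
  using caterpillar_canon_eq_comb[OF assms(2)] canon_canonical[OF assms(1)] by simp

lemma finite_leaves_eq: "finite {t. leaves t = n}"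
proof (induction n rule: less_induct)
  case (less n)
  let ?U = "\<Union>i\<in>{1..<n}. case_prod Node ` ({t. leaves t = i} \<times> {t. leaves t = n - i})"
  have "{t. leaves t = n} \<subseteq> insert Leaf ?U"
  proof
    fix t assume t: "t \<in> {t. leaves t = n}"
    show "t \<in> insert Leaf ?U"
    proof (cases t)
      case (Node a b)
      with t have "leaves a \<in> {1..<n}" "leaves b = n - leaves a"
        using leaves_pos[of a] leaves_pos[of b] by auto
      then show ?thesis using Node by blast
    qed auto
  qed
  moreover have "finite ?U"
    using less by (intro finite_UN_I) auto
  ultimately show ?case using finite_subset by blast
qed

definition Can :: "nat \<Rightarrow> nat \<Rightarrow> btree set" where
  "Can k n = {t. canonical t \<and> leaves t = n \<and> gamma_rec t \<le> k}"

lemma finite_Can: "finite (Can k n)"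
  by (rule finite_subset[OF _ finite_leaves_eq[of n]]) (auto simp: Can_def)

lemma w_eq_card_Can: "w n k = card (Can k n)"
proof -
  let ?A = "{t. leaves t = n \<and> gamma t \<le> k}"
  let ?class = "\<lambda>c. {s. canon s = c}"
  have "iso_rel `` {x} = ?class (canon x)" for x
    by (auto simp: iso_rel_def btree_iso_iff_canon)
  then have classes: "?A // iso_rel = ?class ` canon ` ?A"
    unfolding quotient_def image_image by auto
  have "canon ` ?A = Can k n"
    by (force simp: Can_def canonical_canon canon_canonical leaves_canon gamma_rec_canon
        gamma_eq_gamma_rec intro: image_eqI[where x = t and f = canon for t])
  moreover have "inj_on ?class (Can k n)"
  proof (rule inj_onI)
    fix x y assume x: "x \<in> Can k n" and "?class x = ?class y"
    moreover have "x \<in> ?class x" using x by (simp add: Can_def canon_canonical)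
    ultimately have "canon x = y" by blast
    then show "x = y" using x by (simp add: Can_def canon_canonical)
  qed
  ultimately show ?thesis
    unfolding w_def classes by (simp add: card_image)
qed

lemma w_0: "w 0 k = 0"
  by (simp add: w_eq_card_Can Can_def leaves_neq_0)

lemma leaves_eq_1_iff: "leaves t = 1 \<longleftrightarrow> t = Leaf"
proof (cases t)
  case (Node a b)
  then show ?thesis using leaves_pos[of a] leaves_pos[of b] by simp
qed simp

lemma w_1:
  assumes "1 \<le> k"
  shows "w 1 k = 1"
proof -
  have "Can k 1 = {Leaf}"
    using assms by (auto simp: Can_def leaves_eq_1_iff[unfolded One_nat_def])
  then show ?thesis by (simp add: w_eq_card_Can)
qed

section \<open>Counting un-ordered pairs\<close>

lemma card_swap_closed_pairs:
  fixes S :: "('a \<times> 'a) set" and key :: "'a \<Rightarrow> 'b::linorder"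
  assumes "finite S" "inj key" "\<And>a b. (a, b) \<in> S \<Longrightarrow> (b, a) \<in> S"
  shows "card S + card {(a, b) \<in> S. a = b} = 2 * card {(a, b) \<in> S. key a \<le> key b}"
proof -
  define U where "U = {(a, b) \<in> S. key a \<le> key b}"
  define swap :: "'a \<times> 'a \<Rightarrow> 'a \<times> 'a" where "swap = (\<lambda>(a, b). (b, a))"
  have "S = U \<union> swap ` U"
    using assms(3) by (force simp: U_def swap_def image_iff)
  moreover have "U \<inter> swap ` U = {(a, b) \<in> S. a = b}"
    using injD[OF assms(2)] by (force simp: U_def swap_def)
  moreover have "card (swap ` U) = card U"
    by (rule card_image) (auto simp: swap_def inj_on_def)
  moreover have "finite U"
    by (rule finite_subset[OF _ assms(1)]) (auto simp: U_def)
  ultimately show ?thesis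
    using card_Un_Int[of U "swap ` U"] by (simp add: U_def)
qed

definition Pairs :: "nat \<Rightarrow> nat \<Rightarrow> (btree \<times> btree) set" where
  "Pairs k n = (\<Union>i\<in>{0..n}. Can k i \<times> Can k (n - i))"

definition Diag :: "nat \<Rightarrow> nat \<Rightarrow> (btree \<times> btree) set" where
  "Diag k n = {(a, b) \<in> Pairs k n. a = b}"

lemma mem_Pairs:
  "(a, b) \<in> Pairs k n \<longleftrightarrow> a \<in> Can k (leaves a) \<and> b \<in> Can k (leaves b) \<and> leaves a + leaves b = n"
  by (auto simp: Pairs_def Can_def)

lemma finite_Pairs: "finite (Pairs k n)"
  by (simp add: Pairs_def finite_Can)

lemma card_Pairs: "card (Pairs k n) = (\<Sum>i=0..n. w i k * w (n - i) k)"
proof -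
  have "card (Pairs k n) = (\<Sum>i=0..n. card (Can k i \<times> Can k (n - i)))"
    unfolding Pairs_def
  proof (rule card_UN_disjoint)
    show "\<forall>i\<in>{0..n}. finite (Can k i \<times> Can k (n - i))"
      by (simp add: finite_Can)
    show "\<forall>i\<in>{0..n}. \<forall>j\<in>{0..n}. i \<noteq> j \<longrightarrow> (Can k i \<times> Can k (n - i)) \<inter> (Can k j \<times> Can k (n - j)) = {}"
      by (auto simp: Can_def)
  qed simp
  then show ?thesis by (simp add: w_eq_card_Can card_cartesian_product)
qed

lemma card_Diag: "card (Diag k n) = (if even n then w (n div 2) k else 0)"
proof -
  have "Diag k n = (\<lambda>a. (a, a)) ` Can k (n div 2)" if "even n"
    using that by (auto simp: Diag_def mem_Pairs Can_def)
  moreover have "Diag k n = {}" if "odd n"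
    using that by (auto simp: Diag_def mem_Pairs)
  ultimately show ?thesis by (simp add: card_image inj_on_def w_eq_card_Can)
qed

section \<open>The recursion for the coefficients\<close>

definition Sorted_Nodes :: "nat \<Rightarrow> nat \<Rightarrow> btree set" where
  "Sorted_Nodes k n = case_prod Node ` {(a, b) \<in> Pairs k n. to_nat a \<le> to_nat b}"

lemma Node_in_Sorted_Nodes_iff:
  "Node a b \<in> Sorted_Nodes k n \<longleftrightarrow>
   canonical (Node a b) \<and> leaves (Node a b) = n \<and> gamma_rec a \<le> k \<and> gamma_rec b \<le> k"
  by (auto simp: Sorted_Nodes_def mem_Pairs Can_def)

lemma Leaf_notin_Sorted_Nodes: "Leaf \<notin> Sorted_Nodes k n"
  by (auto simp: Sorted_Nodes_def)

lemma finite_Sorted_Nodes: "finite (Sorted_Nodes k n)"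
  unfolding Sorted_Nodes_def by (rule finite_imageI, rule finite_subset[OF _ finite_Pairs]) auto

text \<open>Sorted pairs are un-ordered pairs, so they are counted by ordered pairs
  and the diagonal.\<close>
lemma card_Sorted_Nodes: "2 * card (Sorted_Nodes k n) = card (Pairs k n) + card (Diag k n)"
proof -
  have "card (Sorted_Nodes k n) = card {(a, b) \<in> Pairs k n. to_nat a \<le> to_nat b}"
    unfolding Sorted_Nodes_def by (rule card_image) (auto simp: inj_on_def)
  then show ?thesis
    using card_swap_closed_pairs[OF finite_Pairs inj_to_nat] by (simp add: Diag_def mem_Pairs)
qed

definition Too_Long :: "nat \<Rightarrow> nat \<Rightarrow> btree set" where
  "Too_Long k n = {t \<in> Sorted_Nodes k n. caterpillar t \<and> k < n}"

lemma Node_in_Can_iff: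
  "Node a b \<in> Can k n \<longleftrightarrow> Node a b \<in> Sorted_Nodes k n \<and> \<not> (caterpillar (Node a b) \<and> k < n)"
  by (auto simp: Can_def Node_in_Sorted_Nodes_iff gamma_rec_Node_le_iff
      simp del: caterpillar.simps canonical.simps)

lemma Sorted_Nodes_split:
  assumes "2 \<le> n"
  shows "Sorted_Nodes k n = Can k n \<union> Too_Long k n" and "Can k n \<inter> Too_Long k n = {}"
proof -
  have "(t \<in> Sorted_Nodes k n \<longleftrightarrow> t \<in> Can k n \<or> t \<in> Too_Long k n) \<and>
        \<not> (t \<in> Can k n \<and> t \<in> Too_Long k n)" for t
  proof (cases t)
    case Leaf
    then show ?thesis using assms Leaf_notin_Sorted_Nodes by (simp add: Can_def Too_Long_def)
  next
    case Node
    then show ?thesis using Node_in_Can_iff by (auto simp: Too_Long_def)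
  qed
  then show "Sorted_Nodes k n = Can k n \<union> Too_Long k n" and "Can k n \<inter> Too_Long k n = {}"
    by blast+
qed

lemma card_Too_Long:
  assumes "1 \<le> k"
  shows "card (Too_Long k n) = (if n = k + 1 then 1 else 0)"
proof -
  let ?c = "canon (comb k)"
  have c: "canonical ?c" "caterpillar ?c" "leaves ?c = k + 1"
    using canonical_canon caterpillar_canon caterpillar_comb leaves_canon leaves_comb by auto
  have "Too_Long k n \<subseteq> {?c} \<inter> {t. n = k + 1}"
  proof
    fix t assume t: "t \<in> Too_Long k n"
    then obtain a b where ab: "t = Node a b" "canonical t" "caterpillar t" "k < leaves t"
      "leaves t = n" "gamma_rec a \<le> k" "gamma_rec b \<le> k"
      using Leaf_notin_Sorted_Nodes
      by (cases t) (auto simp: Too_Long_def Node_in_Sorted_Nodes_iff simp del: caterpillar.simps)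
    then have "leaves t \<le> k + 1"
      using gamma_rec_caterpillar[of a] gamma_rec_caterpillar[of b] by auto
    then have "leaves t = k + 1" using ab by simp
    moreover have "t = canon (comb (leaves t - 1))"
      using canonical_caterpillar_unique[OF ab(2,3)] .
    ultimately show "t \<in> {?c} \<inter> {t. n = k + 1}"
      using ab by (metis Int_iff add_diff_cancel_right' mem_Collect_eq singletonI)
  qed
  moreover have "?c \<in> Too_Long k (k + 1)"
  proof -
    obtain a b where ab: "?c = Node a b"
      using c assms by (cases ?c) auto
    then have "leaves a \<le> k" "leaves b \<le> k"
      using c leaves_pos[of a] leaves_pos[of b] by auto
    then show ?thesis
      using ab c gamma_rec_le_leaves[of a] gamma_rec_le_leaves[of b]
      by (simp add: Too_Long_def Node_in_Sorted_Nodes_iff del: caterpillar.simps)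
  qed
  ultimately have "Too_Long k n = (if n = k + 1 then {?c} else {})"
    by auto
  then show ?thesis by simp
qed

text \<open>The coefficient recursion, valid for all \<open>n\<close> (for \<open>n < 2\<close> there are no pairs).\<close>
lemma w_recursion:
  assumes "1 \<le> k"
  shows "2 * w n k + 2 * of_bool (n = k + 1) =
         card (Pairs k n) + card (Diag k n) + 2 * of_bool (n = 1)"
proof (cases "2 \<le> n")
  case True
  have "finite (Too_Long k n)"
    by (rule finite_subset[OF _ finite_Sorted_Nodes]) (auto simp: Too_Long_def)
  then have "card (Sorted_Nodes k n) = card (Can k n) + card (Too_Long k n)"
    using Sorted_Nodes_split[OF True] by (simp add: card_Un_disjoint finite_Can)
  then have "card (Sorted_Nodes k n) = w n k + of_bool (n = k + 1)"
    using card_Too_Long[OF assms, of n] by (simp add: w_eq_card_Can)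
  then show ?thesis
    using card_Sorted_Nodes[of k n] True by simp
next
  case False
  have "(a, b) \<notin> Pairs k n" for a b
    using False leaves_pos[of a] leaves_pos[of b] by (auto simp: mem_Pairs)
  then have "Pairs k n = {}" "Diag k n = {}"
    by (auto simp: Diag_def)
  moreover have "n = 0 \<or> n = 1"
    using False by auto
  ultimately show ?thesis
    using assms w_0[of k] w_1[OF assms] by auto
qed

section \<open>The generating function\<close>

lemma fps_nth_numeral_mult: "fps_nth (numeral c * (f :: 'a::comm_semiring_1 fps)) n = numeral c * fps_nth f n"
  by (simp only: fps_numeral_fps_const fps_mult_left_const_nth)

lemma fps_nth_div_numeral: "fps_nth ((f :: 'a::field fps) / numeral c) n = fps_nth f n / numeral c"
proof -
  have "f / numeral c = fps_const (inverse (numeral c)) * f"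
    by (simp only: fps_numeral_fps_const divide_fps_const)
  then show ?thesis by (simp add: inverse_eq_divide)
qed

lemma fps_nth_compose_X_squared:
  "fps_nth ((f :: 'a::comm_ring_1 fps) oo fps_X ^ 2) n = (if even n then fps_nth f (n div 2) else 0)"
proof -
  have "fps_nth (f oo fps_X ^ 2) n = (\<Sum>i\<in>{0..n}. if i = n div 2 \<and> even n then fps_nth f i else 0)"
    unfolding fps_compose_nth power_mult[symmetric] fps_X_power_nth
    by (intro sum.cong) auto
  then show ?thesis by (simp add: sum.delta)
qed

lemma W_nth: "fps_nth (W k) n = real (w n k)"
  by (simp add: W_def)

lemma W_squared_nth: "fps_nth ((W k)\<^sup>2) n = real (card (Pairs k n))"
  by (simp add: power2_eq_square fps_mult_nth W_nth card_Pairs)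

lemma W_compose_X_squared_nth: "fps_nth (W k oo fps_X ^ 2) n = real (card (Diag k n))"
  by (simp add: fps_nth_compose_X_squared W_nth card_Diag)

lemma W_functional_equation:
  assumes "1 \<le> k"
  shows "W k = fps_X + (W k)\<^sup>2 / 2 + fps_compose (W k) (fps_X ^ 2) / 2 - fps_X ^ (k + 1)"
proof (rule fps_ext)
  fix n
  have "2 * real (w n k) + 2 * of_bool (n = k + 1) =
        real (card (Pairs k n)) + real (card (Diag k n)) + 2 * of_bool (n = 1)"
    using arg_cong[OF w_recursion[OF assms, of n], of real] by simp
  then show "fps_nth (W k) n =
      fps_nth (fps_X + (W k)\<^sup>2 / 2 + fps_compose (W k) (fps_X ^ 2) / 2 - fps_X ^ (k + 1)) n"
    unfolding fps_add_nth fps_sub_nth fps_nth_div_numeral W_squared_nth W_compose_X_squared_nth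
      fps_X_nth fps_X_power_nth W_nth
    by (cases "n = 1"; cases "n = k + 1") auto
qed

text \<open>A power series \<open>a\<close> without constant term with \<open>a = p + a\<^sup>2/2\<close> is
  \<open>1 - \<surd>(1 - 2p)\<close>: indeed \<open>(1 - a)\<^sup>2 = 1 - 2p\<close>, and \<open>1 - a\<close> has constant term 1.\<close>
lemma fps_quadratic_solution:
  fixes a p :: "real fps"
  assumes a0: "fps_nth a 0 = 0" and a_eq: "a = p + a\<^sup>2 / 2"
  shows "a = 1 - fps_radical (\<lambda>n x. root n x) 2 (1 - 2 * p)"
proof -
  have "2 * (a\<^sup>2 / 2) = a\<^sup>2"
    by (rule fps_ext) (simp add: fps_nth_numeral_mult fps_nth_div_numeral)
  then have "(1 - a) ^ Suc 1 = 1 - 2 * (a - a\<^sup>2 / 2)"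
    by (simp add: power2_eq_square algebra_simps)
  also have "a - a\<^sup>2 / 2 = p"
    using a_eq by (metis add_diff_cancel_right')
  finally have square: "(1 - a) ^ Suc 1 = 1 - 2 * p" .
  have "fps_nth a 0 = fps_nth p 0 + fps_nth (a\<^sup>2) 0 / 2"
    by (subst a_eq) (simp only: fps_add_nth fps_nth_div_numeral)
  then have "fps_nth p 0 = 0"
    using a0 by (simp add: fps_nth_power_0)
  then have "fps_nth (1 - 2 * p) 0 = 1"
    by (simp only: fps_sub_nth fps_nth_numeral_mult) simp
  then have "1 - a = fps_radical (\<lambda>n x. root n x) (Suc 1) (1 - 2 * p)"
    using radical_unique[where r = "\<lambda>n x. root n x" and k = 1 and b = "1 - 2 * p" and a = "1 - a"]
      square a0 by simp
  then show ?thesis by (simp add: numeral_2_eq_2 algebra_simps)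
qed

theorem mainTheorem12:
  fixes k :: nat
  assumes "k \<ge> 1"
  shows "W k = fps_X + (W k)\<^sup>2 / 2 + fps_compose (W k) (fps_X ^ 2) / 2 - fps_X ^ (k + 1)
         \<and> W k = 1 - fps_radical (\<lambda>n x. root n x) 2 (1 - 2 * phi k)"
proof
  show "W k = fps_X + (W k)\<^sup>2 / 2 + fps_compose (W k) (fps_X ^ 2) / 2 - fps_X ^ (k + 1)"
    using W_functional_equation[OF assms] .
  then have "W k = phi k + (W k)\<^sup>2 / 2"
    by (simp add: phi_def algebra_simps)
  moreover have "fps_nth (W k) 0 = 0"
    by (simp add: W_nth w_0)
  ultimately show "W k = 1 - fps_radical (\<lambda>n x. root n x) 2 (1 - 2 * phi k)"
    by (intro fps_quadratic_solution)
qed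

end
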